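(* Let $n\in\mathbb{N}$ and let $f_0,f_1,\dots,f_{n-1}$ be complex-valued functions on the unit disc $\mathbb{D}$. For $z\in\mathbb{D}$ and $j=0,\dots,n-1$ define $$D_j(z)=\sum_{k=0}^{n-1}|z|^{jk}f_k(z)\frac{(1-|z|^2)^n}{(1-|z|^{j+2})^k}.$$ Then there exist functions $b_{jk}$ on $\{0<|z|<1\}$, bounded on $\{\frac12<|z|<1\}$, such that for each $0\le k\le n-1$, $$f_k(z)(1-|z|)^{n-k}=\sum_{j=0}^{n-1}b_{jk}(z)D_j(z),\qquad 0<|z|<1.$$ *)

theory Defs
  imports Complex_Main
begin

definition Dfun :: "nat \<Rightarrow> (nat \<Rightarrow> complex \<Rightarrow> complex) \<Rightarrow> nat \<Rightarrow> complex \<Rightarrow> complex" where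
  "Dfun n f j z = (\<Sum>k<n. of_real (norm z ^ (j * k)) * f k z *
      of_real ((1 - (norm z)\<^sup>2) ^ n / (1 - norm z ^ (j + 2)) ^ k))"

end

theory Submission
  imports Defs "HOL-Computational_Algebra.Polynomial"
begin

text \<open>Put \<open>r = |z|\<close> and \<open>f_k = (1 - r)^k g_k\<close>. Then \<open>D_j = (1 - r^2)^n \<Sum>_k y_j^k g_k\<close> with
  nodes \<open>y_j = r^j (1 - r) / (1 - r^(j+2))\<close>, so the \<open>D_j\<close> are a Vandermonde transform of the
  \<open>g_k\<close>. For \<open>0 < r < 1\<close> the nodes strictly decrease in \<open>j\<close>, and the coefficients of the
  Lagrange basis polynomials invert the system; since \<open>(1 - r)^n / (1 - r^2)^n = (1 + r)^(-n)\<close>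
  this expresses \<open>f_k (1 - r)^(n-k) = (1 - r)^n g_k\<close> through the \<open>D_j\<close>. For \<open>r \<ge> 1/2\<close> the
  nodes lie in \<open>[0, 1]\<close> and are separated by \<open>2^(-n) / (n + 1)^2\<close>, which bounds the Lagrange
  coefficients, hence the \<open>b_jk\<close>, uniformly.\<close>

definition lagrange_basis :: "nat \<Rightarrow> (nat \<Rightarrow> 'a::field) \<Rightarrow> nat \<Rightarrow> 'a poly" where
  "lagrange_basis n y j =
     smult (inverse (\<Prod>i\<in>{..<n} - {j}. y j - y i)) (\<Prod>i\<in>{..<n} - {j}. [:- y i, 1:])"

lemma poly_lagrange_basis:
  assumes "inj_on y {..<n}" "j < n" "m < n"
  shows "poly (lagrange_basis n y j) (y m) = (if m = j then 1 else 0)"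
proof (cases "m = j")
  case True
  have "(\<Prod>i\<in>{..<n} - {j}. y j - y i) \<noteq> 0"
    using assms by (auto simp: inj_on_def)
  with True show ?thesis
    by (simp add: lagrange_basis_def poly_prod)
next
  case False
  then have "(\<Prod>i\<in>{..<n} - {j}. y m - y i) = 0"
    using assms by (intro prod_zero) auto
  with False show ?thesis
    by (simp add: lagrange_basis_def poly_prod)
qed

lemma degree_lagrange_basis_le:
  assumes "j < n"
  shows "degree (lagrange_basis n y j) \<le> n - 1"
proof -
  have "degree (lagrange_basis n y j) \<le> degree (\<Prod>i\<in>{..<n} - {j}. [:- y i, 1:])"
    unfolding lagrange_basis_def by (rule degree_smult_le)
  also have "\<dots> \<le> (\<Sum>i\<in>{..<n} - {j}. degree [:- y i, 1:])"
    by (rule degree_prod_sum_le[unfolded comp_def]) simp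
  also have "\<dots> = card ({..<n} - {j})"
    by simp
  also have "\<dots> = n - 1"
    using assms by simp
  finally show ?thesis .
qed

lemma lagrange_interpolation:
  assumes "inj_on y {..<n}" "degree p < n"
  shows "p = (\<Sum>j<n. smult (poly p (y j)) (lagrange_basis n y j))"
proof (rule poly_eqI_degree[where A = "y ` {..<n}"])
  fix x assume "x \<in> y ` {..<n}"
  then obtain m where m: "m < n" "x = y m" by blast
  have "poly (\<Sum>j<n. smult (poly p (y j)) (lagrange_basis n y j)) (y m)
      = (\<Sum>j<n. poly p (y j) * (if m = j then 1 else 0))"
    using assms(1) m(1) by (simp add: poly_sum poly_lagrange_basis)
  also have "\<dots> = poly p (y m)"
    using m(1) by (simp add: if_distrib cong: if_cong)
  finally show "poly p x = poly (\<Sum>j<n. smult (poly p (y j)) (lagrange_basis n y j)) x"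
    using m(2) by simp
next
  show "degree p < card (y ` {..<n})"
    using assms by (simp add: card_image)
  have "degree (\<Sum>j<n. smult (poly p (y j)) (lagrange_basis n y j)) \<le> n - 1"
    by (intro degree_sum_le order.trans[OF degree_smult_le] degree_lagrange_basis_le) auto
  then show "degree (\<Sum>j<n. smult (poly p (y j)) (lagrange_basis n y j)) < card (y ` {..<n})"
    using assms by (simp add: card_image)
qed

lemma vandermonde_inverse:
  assumes "inj_on y {..<n}" "k < n"
  shows "(\<Sum>j<n. coeff (lagrange_basis n y j) k * (\<Sum>m<n. y j ^ m * c m)) = c k"
proof -
  define p where "p = (\<Sum>m<n. monom (c m) m)"
  have "degree p < n"
    unfolding p_def using assms(2)
    by (intro le_less_trans[OF degree_sum_le[where n = "n - 1"]])
       (auto intro: order.trans[OF degree_monom_le])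
  then have "coeff p k = coeff (\<Sum>j<n. smult (poly p (y j)) (lagrange_basis n y j)) k"
    using lagrange_interpolation[OF assms(1)] by metis
  then show ?thesis
    using assms(2) by (simp add: p_def coeff_sum poly_sum poly_monom mult.commute)
qed

lemma norm_coeff_prod_linear_le:
  fixes y :: "'b \<Rightarrow> 'a::real_normed_field"
  assumes "finite S" "\<And>i. i \<in> S \<Longrightarrow> norm (y i) \<le> 1"
  shows "norm (coeff (\<Prod>i\<in>S. [:- y i, 1:]) k) \<le> 2 ^ card S"
  using assms
proof (induction S arbitrary: k rule: finite_induct)
  case empty
  then show ?case by (cases k) auto
next
  case (insert a S)
  let ?q = "\<Prod>i\<in>S. [:- y i, 1:]"
  have IH: "norm (coeff ?q m) \<le> 2 ^ card S" for m
    using insert by auto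
  have "coeff (\<Prod>i\<in>insert a S. [:- y i, 1:]) k = - y a * coeff ?q k + coeff (pCons 0 ?q) k"
    using insert by (simp add: mult_pCons_left)
  also have "norm \<dots> \<le> norm (y a) * norm (coeff ?q k) + norm (coeff (pCons 0 ?q) k)"
    using norm_triangle_ineq[of "- y a * coeff ?q k" "coeff (pCons 0 ?q) k"]
    by (simp add: norm_mult)
  also have "\<dots> \<le> 1 * 2 ^ card S + 2 ^ card S"
    using insert IH[of k] IH[of "k - 1"]
    by (intro add_mono mult_mono) (auto simp: coeff_pCons split: nat.split)
  finally show ?case
    using insert by simp
qed

lemma norm_coeff_lagrange_basis_le:
  fixes y :: "nat \<Rightarrow> 'a::real_normed_field"
  assumes "j < n" "\<delta> > 0" "\<And>i. i < n \<Longrightarrow> norm (y i) \<le> 1"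
    and "\<And>i. i < n \<Longrightarrow> i \<noteq> j \<Longrightarrow> \<delta> \<le> norm (y j - y i)"
  shows "norm (coeff (lagrange_basis n y j) k) \<le> (2 / \<delta>) ^ (n - 1)"
proof -
  have card: "card ({..<n} - {j}) = n - 1"
    using assms(1) by simp
  have "\<delta> ^ (n - 1) \<le> (\<Prod>i\<in>{..<n} - {j}. norm (y j - y i))"
    using prod_mono[of "{..<n} - {j}" "\<lambda>_. \<delta>"] assms(2,4) card by auto
  then have "norm (inverse (\<Prod>i\<in>{..<n} - {j}. y j - y i)) \<le> inverse (\<delta> ^ (n - 1))"
    using assms(2) by (simp add: norm_inverse prod_norm le_imp_inverse_le)
  moreover have "norm (coeff (\<Prod>i\<in>{..<n} - {j}. [:- y i, 1:]) k) \<le> 2 ^ (n - 1)"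
    using norm_coeff_prod_linear_le[of "{..<n} - {j}" y k] assms(3) card by simp
  ultimately have "norm (coeff (lagrange_basis n y j) k) \<le> inverse (\<delta> ^ (n - 1)) * 2 ^ (n - 1)"
    unfolding lagrange_basis_def coeff_smult norm_mult using assms(2) by (intro mult_mono) auto
  then show ?thesis
    by (metis power_divide divide_inverse_commute)
qed

text \<open>The denominator is \<open>(1 - r^(j+2)) / (1 - r)\<close> written as a geometric sum, which is
  visibly \<open>\<ge> 1\<close>.\<close>
definition node :: "real \<Rightarrow> nat \<Rightarrow> real" where
  "node r j = r ^ j / (\<Sum>i<j + 2. r ^ i)"

lemma one_le_sum_power:
  fixes r :: real
  assumes "0 \<le> r" "0 < m"
  shows "1 \<le> (\<Sum>i<m. r ^ i)"
  using member_le_sum[of 0 "{..<m}" "\<lambda>i. r ^ i"] assms by simp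

lemma sum_power_le:
  fixes r :: real
  assumes "0 \<le> r" "r \<le> 1"
  shows "(\<Sum>i<m. r ^ i) \<le> m"
  using sum_bounded_above[of "{..<m}" "\<lambda>i. r ^ i" 1] assms by (simp add: power_le_one)

lemma node_eq:
  assumes "r < 1"
  shows "node r j = r ^ j * (1 - r) / (1 - r ^ (j + 2))"
  using one_diff_power_eq[of r "j + 2"] assms by (simp add: node_def)

lemma node_nonneg: "0 \<le> r \<Longrightarrow> 0 \<le> node r j"
  by (simp add: node_def sum_nonneg)

lemma node_le_one:
  assumes "0 \<le> r" "r \<le> 1"
  shows "node r j \<le> 1"
proof -
  have "r ^ j \<le> 1 * (\<Sum>i<j + 2. r ^ i)"
    using one_le_sum_power[of r "j + 2"] power_le_one[of r j] assms by simp
  then show ?thesis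
    using one_le_sum_power[of r "j + 2"] assms by (simp add: node_def divide_le_eq)
qed

lemma node_diff_Suc:
  assumes "0 \<le> r"
  shows "node r j - node r (Suc j) = r ^ j / ((\<Sum>i<j + 2. r ^ i) * (\<Sum>i<Suc j + 2. r ^ i))"
proof -
  define s where "s = (\<Sum>i<j + 2. r ^ i)"
  have "(\<Sum>i<Suc j + 2. r ^ i) = (\<Sum>i<Suc (j + 2). r ^ i)"
    by simp
  also have "\<dots> = 1 + r * s"
    unfolding s_def by (subst sum.lessThan_Suc_shift) (simp only: power_0 power_Suc sum_distrib_left)
  finally have s_Suc: "(\<Sum>i<Suc j + 2. r ^ i) = 1 + r * s" .
  have "1 \<le> s" "1 \<le> 1 + r * s"
    using one_le_sum_power[of r "j + 2"] assms by (simp_all add: s_def)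
  then show ?thesis
    unfolding node_def s_Suc s_def[symmetric]
    by (simp add: field_simps)
qed

lemma node_gap_pos: "0 < r \<Longrightarrow> 0 < node r j - node r (Suc j)"
  using one_le_sum_power[of r "j + 2"] one_le_sum_power[of r "Suc j + 2"]
  by (simp add: node_diff_Suc)

lemma antimono_node:
  assumes "0 \<le> r"
  shows "antimono (node r)"
  unfolding decseq_Suc_iff
proof
  fix j
  have "0 \<le> r ^ j / ((\<Sum>i<j + 2. r ^ i) * (\<Sum>i<Suc j + 2. r ^ i))"
    using assms by (simp add: sum_nonneg)
  then show "node r (Suc j) \<le> node r j"
    using node_diff_Suc[OF assms, of j] by linarith
qed

lemma node_gap_le_diff:
  assumes "0 \<le> r" "j < i"
  shows "node r j - node r (Suc j) \<le> node r j - node r i"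
  using antimonoD[OF antimono_node[OF assms(1)], of "Suc j" i] assms(2) by simp

lemma inj_node:
  assumes "0 < r"
  shows "inj (node r)"
proof (rule linorder_injI)
  fix j i :: nat
  assume "j < i"
  then have "0 < node r j - node r i"
    using node_gap_pos[OF assms, of j] node_gap_le_diff[of r j i] assms by linarith
  then show "node r j \<noteq> node r i"
    by simp
qed

lemma node_separated:
  assumes "1/2 \<le> r" "r \<le> 1" "j < i" "i < n"
  shows "(1/2) ^ n / (real n + 1) ^ 2 \<le> node r j - node r i"
proof -
  have "(1/2) ^ n \<le> (1/2 :: real) ^ j"
    using assms by (intro power_decreasing) auto
  also have "\<dots> \<le> r ^ j"
    using assms by (intro power_mono) auto
  finally have num: "(1/2) ^ n \<le> r ^ j" .
  have "(\<Sum>i<j + 2. r ^ i) * (\<Sum>i<Suc j + 2. r ^ i) \<le> (real n + 1) * (real n + 1)"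
    using sum_power_le[of r "j + 2"] sum_power_le[of r "Suc j + 2"]
      one_le_sum_power[of r "Suc j + 2"] assms
    by (intro mult_mono) auto
  then have "(1/2) ^ n / (real n + 1) ^ 2 \<le> r ^ j / ((\<Sum>i<j + 2. r ^ i) * (\<Sum>i<Suc j + 2. r ^ i))"
    using num one_le_sum_power[of r "j + 2"] one_le_sum_power[of r "Suc j + 2"] assms
    by (intro frac_le) (auto simp: power2_eq_square)
  also have "\<dots> \<le> node r j - node r i"
    using node_gap_le_diff[of r j i] node_diff_Suc[of r j] assms by simp
  finally show ?thesis .
qed

lemma norm_coeff_lagrange_basis_node_le:
  assumes "j < n" "1/2 \<le> r" "r \<le> 1"
  shows "norm (coeff (lagrange_basis n (\<lambda>i. complex_of_real (node r i)) j) k)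
           \<le> (2 ^ (n + 1) * (real n + 1) ^ 2) ^ (n - 1)"
proof -
  define \<delta> :: real where "\<delta> = (1/2) ^ n / (real n + 1) ^ 2"
  have "norm (coeff (lagrange_basis n (\<lambda>i. complex_of_real (node r i)) j) k) \<le> (2 / \<delta>) ^ (n - 1)"
  proof (rule norm_coeff_lagrange_basis_le)
    show "j < n" "0 < \<delta>"
      using assms(1) by (simp_all add: \<delta>_def)
    show "norm (complex_of_real (node r i)) \<le> 1" for i
      using node_nonneg[of r i] node_le_one[of r i] assms by simp
    show "\<delta> \<le> norm (complex_of_real (node r j) - complex_of_real (node r i))"
      if "i < n" "i \<noteq> j" for i
    proof (cases "j < i")
      case True
      then show ?thesis
        using node_separated[of r j i n] assms that by (simp add: \<delta>_def flip: of_real_diff)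
    next
      case False
      then show ?thesis
        using node_separated[of r i j n] assms that by (simp add: \<delta>_def flip: of_real_diff)
    qed
  qed
  moreover have "2 / \<delta> = 2 ^ (n + 1) * (real n + 1) ^ 2"
    by (simp add: \<delta>_def power_one_over)
  ultimately show ?thesis
    by simp
qed

lemma Dfun_eq_vandermonde_sum:
  assumes "norm z < 1"
  shows "Dfun n f j z = of_real ((1 - (norm z)\<^sup>2) ^ n) *
           (\<Sum>m<n. of_real (node (norm z) j) ^ m * (f m z / of_real ((1 - norm z) ^ m)))"
proof -
  define r where "r = norm z"
  have r: "0 \<le> r" "r < 1"
    using assms by (simp_all add: r_def)
  have "1 - r ^ (j + 2) \<noteq> 0"
    using r power_strict_mono[of r 1 "j + 2"] by simp
  then have factor_eq: "r ^ (j * m) * ((1 - r\<^sup>2) ^ n / (1 - r ^ (j + 2)) ^ m)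
        = (1 - r\<^sup>2) ^ n * node r j ^ m / (1 - r) ^ m" for m
    using r by (simp add: node_eq power_mult power_divide power_mult_distrib)
  have "of_real (r ^ (j * m)) * f m z * of_real ((1 - r\<^sup>2) ^ n / (1 - r ^ (j + 2)) ^ m)
      = of_real ((1 - r\<^sup>2) ^ n) * (of_real (node r j) ^ m * (f m z / of_real ((1 - r) ^ m)))"
    for m
  proof -
    have "of_real (r ^ (j * m)) * f m z * of_real ((1 - r\<^sup>2) ^ n / (1 - r ^ (j + 2)) ^ m)
        = of_real (r ^ (j * m) * ((1 - r\<^sup>2) ^ n / (1 - r ^ (j + 2)) ^ m)) * f m z"
      by (simp only: of_real_mult mult_ac)
    also have "\<dots> = of_real ((1 - r\<^sup>2) ^ n * node r j ^ m / (1 - r) ^ m) * f m z"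
      by (simp only: factor_eq)
    finally show ?thesis
      by (simp add: mult_ac)
  qed
  then show ?thesis
    unfolding Dfun_def r_def[symmetric] sum_distrib_left by simp
qed

lemma weighted_f_eq_sum_Dfun:
  assumes "k < n" "0 < norm z" "norm z < 1"
  shows "f k z * of_real ((1 - norm z) ^ (n - k)) =
    (\<Sum>j<n. of_real (1 / (1 + norm z) ^ n) *
              coeff (lagrange_basis n (\<lambda>i. complex_of_real (node (norm z) i)) j) k * Dfun n f j z)"
proof -
  define r where "r = norm z"
  define y where "y = (\<lambda>i. complex_of_real (node r i))"
  define c where "c m = f m z / of_real ((1 - r) ^ m)" for m
  have r: "0 < r" "r < 1"
    using assms by (simp_all add: r_def)
  have inj: "inj_on y {..<n}"
    using inj_node[OF r(1)] by (simp add: y_def inj_on_def)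
  have weights: "of_real ((1 - r) ^ n) * (\<Sum>m<n. y j ^ m * c m) =
      of_real (1 / (1 + r) ^ n) * Dfun n f j z" for j
  proof -
    have "1 - r\<^sup>2 = (1 - r) * (1 + r)"
      by (simp add: power2_eq_square algebra_simps)
    then have "(1 - r\<^sup>2) ^ n = (1 - r) ^ n * (1 + r) ^ n"
      by (simp add: power_mult_distrib)
    moreover have "1 + complex_of_real r \<noteq> 0"
      using r by (simp add: complex_eq_iff)
    ultimately show ?thesis
      using Dfun_eq_vandermonde_sum[of z n f j] r
      by (simp add: r_def[symmetric] y_def c_def)
  qed
  have "(1 - r) ^ n = (1 - r) ^ k * (1 - r) ^ (n - k)"
    using assms(1) by (simp flip: power_add)
  then have "f k z * of_real ((1 - r) ^ (n - k)) = of_real ((1 - r) ^ n) * c k"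
    using r by (simp add: c_def)
  also have "\<dots> = of_real ((1 - r) ^ n) *
      (\<Sum>j<n. coeff (lagrange_basis n y j) k * (\<Sum>m<n. y j ^ m * c m))"
    using vandermonde_inverse[OF inj assms(1)] by simp
  also have "\<dots> = (\<Sum>j<n. coeff (lagrange_basis n y j) k * (of_real ((1 - r) ^ n) * (\<Sum>m<n. y j ^ m * c m)))"
    by (simp add: sum_distrib_left mult.left_commute)
  also have "\<dots> = (\<Sum>j<n. of_real (1 / (1 + r) ^ n) * coeff (lagrange_basis n y j) k * Dfun n f j z)"
    by (simp only: weights mult.left_commute mult.assoc)
  finally show ?thesis
    by (simp add: r_def y_def)
qed

theorem lemma2p6:
  fixes n :: nat and f :: "nat \<Rightarrow> complex \<Rightarrow> complex"
  shows "\<exists>b :: nat \<Rightarrow> nat \<Rightarrow> complex \<Rightarrow> complex.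
     (\<forall>j<n. \<forall>k<n. \<exists>M. \<forall>z. 1/2 < norm z \<and> norm z < 1 \<longrightarrow> norm (b j k z) \<le> M) \<and>
     (\<forall>k<n. \<forall>z. 0 < norm z \<and> norm z < 1 \<longrightarrow>
        f k z * of_real ((1 - norm z) ^ (n - k)) = (\<Sum>j<n. b j k z * Dfun n f j z))"
proof -
  define b where "b j k z = of_real (1 / (1 + norm z) ^ n) *
      coeff (lagrange_basis n (\<lambda>i. complex_of_real (node (norm z) i)) j) k" for j k and z :: complex
  have bound: "norm (b j k z) \<le> (2 ^ (n + 1) * (real n + 1) ^ 2) ^ (n - 1)"
    if "j < n" "1/2 < norm z" "norm z < 1" for j k z
  proof -
    let ?c = "coeff (lagrange_basis n (\<lambda>i. complex_of_real (node (norm z) i)) j) k"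
    have "norm (b j k z) \<le> norm ?c"
      unfolding b_def norm_mult norm_of_real
      by (rule mult_left_le_one_le) (simp_all add: divide_le_eq one_le_power)
    also have "\<dots> \<le> (2 ^ (n + 1) * (real n + 1) ^ 2) ^ (n - 1)"
      using norm_coeff_lagrange_basis_node_le[of j n "norm z" k] that by simp
    finally show ?thesis .
  qed
  moreover have "f k z * of_real ((1 - norm z) ^ (n - k)) = (\<Sum>j<n. b j k z * Dfun n f j z)"
    if "k < n" "0 < norm z" "norm z < 1" for k z
    using weighted_f_eq_sum_Dfun[OF that, of f] by (simp add: b_def)
  ultimately show ?thesis
    by blast
qed

end
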